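(* Let $f:\mathbb{R}\to\mathbb{R}$ satisfy assumptions (A1) and (A2) below, and consider the Cauchy problem $\dot x=f(x)$, $x(0)=x_0$. Then: (i) for every $x_0\in\mathbb{R}$ there exists at least one Carathéodory solution, defined for all times $t\geq 0$; (ii) every Carathéodory solution is monotone (either nondecreasing or nonincreasing); (iii) for each $x_0$, the set of all Carathéodory solutions is nonempty and closed with respect to the topology of uniform convergence on bounded subsets of $[0,+\infty[$.
   Context: (A1): $f$ is bounded and regulated, i.e. it admits left and right limits $f(x-)$, $f(x+)$ at every point $x\in\mathbb{R}$. (A2): if $y$ is a point where either $f(y-)\cdot f(y+)=0$ or $f(y-)>0>f(y+)$, then $f(y)=0$. A Carathéodory solution of the Cauchy problem $\dot x=f(x)$, $x(0)=x_0$ is a function $t\mapsto x(t)$ on $[0,+\infty[$ (or on an interval $[0,\tau]$ when stated) satisfying $x(t)=x_0+\int_0^t f(x(s))\,ds$ for all $t$ in its domain. *)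

theory Defs
  imports "HOL-Analysis.Analysis"
begin

definition regulated :: "(real \<Rightarrow> real) \<Rightarrow> bool" where
  "regulated f \<longleftrightarrow>
     (\<forall>x. (\<exists>l. (f \<longlongrightarrow> l) (at_left x)) \<and> (\<exists>r. (f \<longlongrightarrow> r) (at_right x)))"

definition left_lim :: "(real \<Rightarrow> real) \<Rightarrow> real \<Rightarrow> real" where
  "left_lim f y = Lim (at_left y) f"

definition right_lim :: "(real \<Rightarrow> real) \<Rightarrow> real \<Rightarrow> real" where
  "right_lim f y = Lim (at_right y) f"

definition A1 :: "(real \<Rightarrow> real) \<Rightarrow> bool" where
  "A1 f \<longleftrightarrow> bounded (range f) \<and> regulated f"

definition A2 :: "(real \<Rightarrow> real) \<Rightarrow> bool" where
  "A2 f \<longleftrightarrow> (\<forall>y. (left_lim f y * right_lim f y = 0 \<or> (left_lim f y > 0 \<and> 0 > right_lim f y))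
                  \<longrightarrow> f y = 0)"

definition caratheodory_solution_on ::
  "(real \<Rightarrow> real) \<Rightarrow> real \<Rightarrow> real set \<Rightarrow> (real \<Rightarrow> real) \<Rightarrow> bool" where
  "caratheodory_solution_on f x0 I x \<longleftrightarrow>
     (\<forall>t\<in>I. ((\<lambda>s. f (x s)) has_integral (x t - x0)) {0..t})"

end

theory Submission
  imports Defs
begin

(* Monotonicity: a solution is Lipschitz, and it can only climb through a band of levels on
   which f is somewhere positive (descend: somewhere negative).  At a strict local maximum of a
   solution, every level slightly below the maximum is crossed upwards and downwards, so the right
   limit of f vanishes there, A2 gives f = 0 on a whole band, and the solution could not have
   climbed through it.

   Existence: if f x0 \<noteq> 0, A2 leaves only the cases right_lim f x0 > 0 and (after the reflection
   z \<mapsto> -z) left_lim f x0 < 0.  Rising from x0, the solution is the inverse of the arrival time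
   T z = \<integral>[x0,z] 1/f, as long as the one-sided limits of f stay positive; it stops at the
   supremum b of that range, where A2 forces f b = 0.

   Closedness: a locally uniform limit x of solutions Y n is monotone.  Outside countably many
   times s, either f is continuous at x s, or x is constant near s; in the second case the Y n are
   eventually trapped near the level x s, which forces f (x s) = 0 and f (Y n s) \<rightarrow> 0.  Dominated
   convergence passes to the limit in the integral equation. *)

section \<open>Regulated functions\<close>

lemma left_lim_eqI: "(f \<longlongrightarrow> l) (at_left y) \<Longrightarrow> left_lim f y = l"
  unfolding left_lim_def by (rule tendsto_Lim) simp_all

lemma right_lim_eqI: "(f \<longlongrightarrow> l) (at_right y) \<Longrightarrow> right_lim f y = l"
  unfolding right_lim_def by (rule tendsto_Lim) simp_all

lemma regulated_tendsto_left_lim: "regulated f \<Longrightarrow> (f \<longlongrightarrow> left_lim f y) (at_left y)"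
  unfolding regulated_def using left_lim_eqI by metis

lemma regulated_tendsto_right_lim: "regulated f \<Longrightarrow> (f \<longlongrightarrow> right_lim f y) (at_right y)"
  unfolding regulated_def using right_lim_eqI by metis

lemma isCont_right_lim: "isCont f y \<Longrightarrow> right_lim f y = f y"
  by (rule right_lim_eqI) (simp add: isCont_def filterlim_at_split)

lemma isCont_if_one_sided_lims:
  assumes "regulated f" "left_lim f y = f y" "right_lim f y = f y"
  shows "isCont f y"
  using assms regulated_tendsto_left_lim regulated_tendsto_right_lim
  by (metis isCont_def filterlim_at_split)

lemma regulated_sign_band_right:
  assumes "regulated f" "right_lim f y \<noteq> 0"
  shows "\<exists>e>y. \<exists>c>0. (\<forall>z\<in>{y<..<e}. c \<le> f z) \<or> (\<forall>z\<in>{y<..<e}. f z \<le> - c)"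
proof -
  define c where "c = \<bar>right_lim f y\<bar> / 2"
  have c: "c > 0" using assms(2) by (simp add: c_def)
  have "eventually (\<lambda>z. dist (f z) (right_lim f y) < c) (at_right y)"
    using tendstoD[OF regulated_tendsto_right_lim[OF assms(1)] c] .
  then obtain e where "e > y" and e: "\<And>z. y < z \<Longrightarrow> z < e \<Longrightarrow> \<bar>f z - right_lim f y\<bar> < c"
    unfolding eventually_at_right_field dist_real_def by blast
  moreover have "(\<forall>z\<in>{y<..<e}. c \<le> f z) \<or> (\<forall>z\<in>{y<..<e}. f z \<le> - c)"
  proof (cases "right_lim f y > 0")
    case True
    have "c \<le> f z" if "z \<in> {y<..<e}" for z
      using e[of z] that True by (auto simp: c_def abs_if split: if_splits)
    then show ?thesis by blast
  next
    case False
    have "f z \<le> - c" if "z \<in> {y<..<e}" for z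
      using e[of z] that False assms(2) by (auto simp: c_def abs_if split: if_splits)
    then show ?thesis by blast
  qed
  ultimately show ?thesis using c by blast
qed

lemma regulated_eventually_near_lims_right:
  assumes "regulated f" "e > 0"
  shows "eventually (\<lambda>w. \<bar>f w - left_lim f w\<bar> \<le> e \<and> \<bar>f w - right_lim f w\<bar> \<le> e) (at_right z)"
proof -
  let ?l = "right_lim f z"
  have "eventually (\<lambda>v. dist (f v) ?l < e / 2) (at_right z)"
    using tendstoD[OF regulated_tendsto_right_lim[OF assms(1)], of "e / 2"] assms(2) by simp
  then obtain b where "b > z" and b: "\<And>v. z < v \<Longrightarrow> v < b \<Longrightarrow> \<bar>f v - ?l\<bar> < e / 2"
    unfolding eventually_at_right_field dist_real_def by blast
  have "\<bar>f w - left_lim f w\<bar> \<le> e \<and> \<bar>f w - right_lim f w\<bar> \<le> e" if w: "z < w" "w < b" for w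
  proof -
    have "eventually (\<lambda>v. v \<in> {z<..<b}) (at w)"
      by (rule eventually_at_in_open') (use w in auto)
    then have near: "eventually (\<lambda>v. norm (f v - ?l) \<le> e / 2) (at w)"
      by eventually_elim (use b in \<open>auto intro: less_imp_le\<close>)
    have "norm (left_lim f w - ?l) \<le> e / 2"
      by (rule Lim_norm_ubound[OF _ tendsto_diff[OF regulated_tendsto_left_lim[OF assms(1)] tendsto_const]])
        (use near in \<open>simp_all add: eventually_at_split\<close>)
    moreover have "norm (right_lim f w - ?l) \<le> e / 2"
      by (rule Lim_norm_ubound[OF _ tendsto_diff[OF regulated_tendsto_right_lim[OF assms(1)] tendsto_const]])
        (use near in \<open>simp_all add: eventually_at_split\<close>)
    ultimately show ?thesis using b[OF w] unfolding real_norm_def by arith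
  qed
  then show ?thesis
    unfolding eventually_at_right_field using \<open>b > z\<close> by blast
qed

(* Solutions x of f become solutions -x of reflect f, with left and right limits exchanged;
   this reduces downward statements to upward ones. *)
definition reflect :: "(real \<Rightarrow> real) \<Rightarrow> real \<Rightarrow> real" where
  "reflect f z = - f (- z)"

lemma reflect_reflect [simp]: "reflect (reflect f) = f"
  by (simp add: reflect_def fun_eq_iff)

lemma tendsto_reflect_at_left:
  "(f \<longlongrightarrow> l) (at_right (- y)) \<Longrightarrow> (reflect f \<longlongrightarrow> - l) (at_left y)"
  unfolding at_left_minus[of y] filterlim_filtermap reflect_def by (simp add: tendsto_minus)

lemma tendsto_reflect_at_right:
  "(f \<longlongrightarrow> l) (at_left (- y)) \<Longrightarrow> (reflect f \<longlongrightarrow> - l) (at_right y)"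
  unfolding at_right_minus[of y] filterlim_filtermap reflect_def by (simp add: tendsto_minus)

lemma regulated_reflect: "regulated f \<Longrightarrow> regulated (reflect f)"
  unfolding regulated_def by (metis minus_minus tendsto_reflect_at_left tendsto_reflect_at_right)

lemma left_lim_reflect: "regulated f \<Longrightarrow> left_lim (reflect f) y = - right_lim f (- y)"
  by (intro left_lim_eqI tendsto_reflect_at_left regulated_tendsto_right_lim)

lemma right_lim_reflect: "regulated f \<Longrightarrow> right_lim (reflect f) y = - left_lim f (- y)"
  by (intro right_lim_eqI tendsto_reflect_at_right regulated_tendsto_left_lim)

lemma bounded_range_reflect: "bounded (range f) \<Longrightarrow> bounded (range (reflect f))"
  unfolding bounded_iff by (auto simp: reflect_def)

lemma A1_reflect: "A1 f \<Longrightarrow> A1 (reflect f)"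
  unfolding A1_def by (simp add: bounded_range_reflect regulated_reflect)

lemma A2_reflect:
  assumes "A1 f" "A2 f"
  shows "A2 (reflect f)"
proof -
  have "regulated f" using assms(1) by (simp add: A1_def)
  then show ?thesis
    using assms(2) unfolding A2_def
    by (simp add: left_lim_reflect right_lim_reflect reflect_def mult.commute)
qed

lemma caratheodory_solution_on_reflect_iff:
  "caratheodory_solution_on (reflect f) (- x0) I (\<lambda>t. - x t) \<longleftrightarrow> caratheodory_solution_on f x0 I x"
  unfolding caratheodory_solution_on_def reflect_def
  by (simp add: has_integral_neg_iff algebra_simps)

lemma regulated_eventually_near_lims:
  assumes "regulated f" "e > 0"
  shows "eventually (\<lambda>w. \<bar>f w - left_lim f w\<bar> \<le> e \<and> \<bar>f w - right_lim f w\<bar> \<le> e) (at z)"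
proof -
  have "eventually (\<lambda>w. \<bar>reflect f w - left_lim (reflect f) w\<bar> \<le> e \<and>
      \<bar>reflect f w - right_lim (reflect f) w\<bar> \<le> e) (at_right (- z))"
    by (rule regulated_eventually_near_lims_right[OF regulated_reflect[OF assms(1)] assms(2)])
  then have "eventually (\<lambda>w. \<bar>f w - left_lim f w\<bar> \<le> e \<and> \<bar>f w - right_lim f w\<bar> \<le> e) (at_left z)"
    unfolding at_left_minus[of z] eventually_filtermap
    by (simp add: left_lim_reflect right_lim_reflect assms(1) reflect_def abs_minus_commute conj_commute)
  then show ?thesis
    using regulated_eventually_near_lims_right[OF assms] by (simp add: eventually_at_split)
qed

lemma regulated_countable_discontinuities:
  assumes "regulated f"
  shows "countable {y. \<not> isCont f y}"
proof -
  define D where "D n = {y. 1 / Suc n < \<bar>f y - left_lim f y\<bar> \<or> 1 / Suc n < \<bar>f y - right_lim f y\<bar>}"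
    for n :: nat
  have "countable (D n)" for n
  proof (rule no_limpt_imp_countable)
    fix z
    show "\<not> z islimpt D n"
      unfolding islimpt_iff_eventually D_def
      using regulated_eventually_near_lims[OF assms, of "1 / Suc n" z]
      by (auto elim: eventually_mono)
  qed
  moreover have "{y. \<not> isCont f y} \<subseteq> (\<Union>n. D n)"
  proof
    fix y assume "y \<in> {y. \<not> isCont f y}"
    then have "0 < \<bar>f y - left_lim f y\<bar> \<or> 0 < \<bar>f y - right_lim f y\<bar>"
      using isCont_if_one_sided_lims[OF assms] by force
    then obtain n where "1 / Suc n < \<bar>f y - left_lim f y\<bar> \<or> 1 / Suc n < \<bar>f y - right_lim f y\<bar>"
      using reals_Archimedean by (metis inverse_eq_divide)
    then show "y \<in> (\<Union>n. D n)" by (auto simp: D_def)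
  qed
  ultimately show ?thesis by (meson countable_UN countable_subset UNIV_I countableI_type)
qed

lemma countable_imp_negligible: "countable (S :: real set) \<Longrightarrow> negligible S"
  by (metis negligible_iff_null_sets null_sets_completionI countable_imp_null_set_lborel)

section \<open>Monotonicity of solutions\<close>

lemma caratheodory_solution_has_integral:
  assumes sol: "caratheodory_solution_on f x0 I x" and "I \<subseteq> {0..}"
    and "a \<in> I" "b \<in> I" "a \<le> b"
  shows "((\<lambda>s. f (x s)) has_integral (x b - x a)) {a..b}"
proof -
  have "0 \<le> a" using assms by auto
  have ha: "((\<lambda>s. f (x s)) has_integral (x a - x0)) {0..a}"
    and hb: "((\<lambda>s. f (x s)) has_integral (x b - x0)) {0..b}"
    using sol assms(3,4) unfolding caratheodory_solution_on_def by auto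
  have "(\<lambda>s. f (x s)) integrable_on {a..b}"
    by (rule integrable_subinterval_real[OF has_integral_integrable[OF hb]]) (use \<open>0 \<le> a\<close> in auto)
  then obtain J where hJ: "((\<lambda>s. f (x s)) has_integral J) {a..b}" by blast
  have "x a - x0 + J = x b - x0"
    using has_integral_combine[OF \<open>0 \<le> a\<close> \<open>a \<le> b\<close> ha hJ] hb by (rule has_integral_unique)
  then have "J = x b - x a" by linarith
  then show ?thesis using hJ by simp
qed

lemma caratheodory_solution_lipschitz:
  assumes sol: "caratheodory_solution_on f x0 I x" and "I \<subseteq> {0..}" and B: "\<And>z. \<bar>f z\<bar> \<le> B"
  shows "B-lipschitz_on I x"
proof -
  have "0 \<le> B" using B[of 0] by linarith
  have *: "\<bar>x v - x u\<bar> \<le> B * (v - u)" if "u \<in> I" "v \<in> I" "u \<le> v" for u v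
    using has_integral_bound_real[OF \<open>0 \<le> B\<close> finite.emptyI
        caratheodory_solution_has_integral[OF sol assms(2) that]] B that by auto
  show ?thesis
    unfolding lipschitz_on_def dist_real_def
  proof (intro conjI ballI)
    fix u v assume "u \<in> I" "v \<in> I"
    then show "\<bar>x u - x v\<bar> \<le> B * \<bar>u - v\<bar>"
      using *[of u v] *[of v u] by (cases "u \<le> v") (auto simp: abs_minus_commute)
  qed fact
qed

lemma caratheodory_solution_continuous_on:
  assumes "caratheodory_solution_on f x0 I x" "I \<subseteq> {0..}" "bounded (range f)"
  shows "continuous_on I x"
proof -
  obtain B where "\<And>z. \<bar>f z\<bar> \<le> B" using assms(3) unfolding bounded_iff by auto
  then show ?thesis
    by (intro lipschitz_on_continuous_on caratheodory_solution_lipschitz[OF assms(1,2)])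
qed

lemma continuous_on_first_hit:
  fixes g :: "real \<Rightarrow> real"
  assumes cont: "continuous_on {a..b} g" and "a \<le> b" "g a < q" "q \<le> g b"
  shows "\<exists>r. a < r \<and> r \<le> b \<and> g r = q \<and> (\<forall>u. a \<le> u \<and> u < r \<longrightarrow> g u < q)"
proof -
  define A where "A = {a..b} \<inter> g -` {q..}"
  have "closed A" unfolding A_def by (rule continuous_closed_preimage[OF cont]) auto
  moreover have "b \<in> A" using assms by (simp add: A_def)
  moreover have "bdd_below A" unfolding A_def by (rule bdd_belowI[of _ a]) simp
  ultimately have r: "Inf A \<in> A" by (intro closed_contains_Inf) auto
  have below: "g u < q" if "a \<le> u" "u < Inf A" for u
  proof (rule ccontr)
    assume "\<not> g u < q"
    then have "u \<in> A" using that r by (simp add: A_def)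
    then show False using cInf_lower[OF _ \<open>bdd_below A\<close>] that(2) by fastforce
  qed
  have r_ab: "a \<le> Inf A" "Inf A \<le> b" "q \<le> g (Inf A)" using r by (auto simp: A_def)
  then have "a < Inf A" using assms(3) by (metis order.order_iff_strict not_le)
  obtain u where "a \<le> u" "u \<le> Inf A" "g u = q"
    using IVT'[of g a q "Inf A"] r_ab assms(3) continuous_on_subset[OF cont] by force
  then have "g (Inf A) = q" using below by (metis order.order_iff_strict less_irrefl)
  then show ?thesis using \<open>a < Inf A\<close> r_ab below by blast
qed

lemma continuous_on_crossing:
  fixes g :: "real \<Rightarrow> real"
  assumes cont: "continuous_on {a..b} g" and "a \<le> b" "g a \<le> p" "p < q" "q \<le> g b"
  shows "\<exists>s r. a \<le> s \<and> s < r \<and> r \<le> b \<and> g s = p \<and> g r = q \<and> (\<forall>u\<in>{s<..<r}. p < g u \<and> g u < q)"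
proof -
  have "g a < q" using assms(3,4) by linarith
  then obtain r where r: "a < r" "r \<le> b" "g r = q" and below: "\<And>u. a \<le> u \<Longrightarrow> u < r \<Longrightarrow> g u < q"
    using continuous_on_first_hit[OF cont assms(2) _ assms(5)] by blast
  have cont_r: "continuous_on {a..r} g" by (rule continuous_on_subset[OF cont]) (use r in auto)
  define C where "C = {a..r} \<inter> g -` {..p}"
  have "closed C" unfolding C_def by (rule continuous_closed_preimage[OF cont_r]) auto
  moreover have "a \<in> C" using assms r by (simp add: C_def)
  moreover have "bdd_above C" unfolding C_def by (rule bdd_aboveI[of _ r]) simp
  ultimately have s: "Sup C \<in> C" by (intro closed_contains_Sup) auto
  have above: "p < g u" if "Sup C < u" "u \<le> r" for u
  proof (rule ccontr)
    assume "\<not> p < g u"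
    then have "u \<in> C" using that s by (simp add: C_def)
    then show False using cSup_upper[OF _ \<open>bdd_above C\<close>] that(1) by fastforce
  qed
  have s_ar: "a \<le> Sup C" "Sup C \<le> r" "g (Sup C) \<le> p" using s by (auto simp: C_def)
  then have "Sup C < r" using r(3) assms(4) by (metis order.order_iff_strict not_le)
  obtain u where "Sup C \<le> u" "u \<le> r" "g u = p"
    using IVT'[of g "Sup C" p r] s_ar r assms(4) continuous_on_subset[OF cont_r] by force
  then have "g (Sup C) = p" using above by (metis order.order_iff_strict less_irrefl)
  then show ?thesis
    using \<open>Sup C < r\<close> s_ar r above below by (intro exI[of _ "Sup C"] exI[of _ r]) auto
qed


lemma has_integral_nonpos_interior:
  fixes g :: "real \<Rightarrow> real"
  assumes "(g has_integral J) {a..b}" "\<And>u. a < u \<Longrightarrow> u < b \<Longrightarrow> g u \<le> 0"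
  shows "J \<le> 0"
proof -
  let ?h = "\<lambda>u. if a < u \<and> u < b then g u else 0"
  have "(?h has_integral J) {a..b}"
    by (rule has_integral_spike_finite[where S="{a,b}" and f=g]) (use assms in auto)
  then show ?thesis
    using has_integral_le[OF _ has_integral_0, of ?h J "{a..b}"] assms(2) by auto
qed

lemma caratheodory_solution_upcrossing:
  assumes sol: "caratheodory_solution_on f x0 I x" and I: "is_interval I" "I \<subseteq> {0..}"
    and bnd: "bounded (range f)" and ab: "a \<in> I" "b \<in> I" "a \<le> b"
    and pq: "x a \<le> p" "p < q" "q \<le> x b"
  shows "\<exists>z\<in>{p<..<q}. 0 < f z"
proof (rule ccontr)
  assume "\<not> ?thesis"
  then have nonpos: "f z \<le> 0" if "p < z" "z < q" for z
    using that by (auto simp: not_less)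
  have sub: "{a..b} \<subseteq> I" using I(1) ab unfolding is_interval_1 by (meson atLeastAtMost_iff subsetI)
  then have "continuous_on {a..b} x"
    using caratheodory_solution_continuous_on[OF sol I(2) bnd] continuous_on_subset by blast
  then obtain s r where sr: "a \<le> s" "s < r" "r \<le> b" "x s = p" "x r = q"
      and inside: "\<forall>u\<in>{s<..<r}. p < x u \<and> x u < q"
    using continuous_on_crossing[OF _ ab(3) pq] by metis
  have "((\<lambda>u. f (x u)) has_integral (x r - x s)) {s..r}"
    by (rule caratheodory_solution_has_integral[OF sol I(2)]) (use sub sr in auto)
  then have "x r - x s \<le> 0"
    by (rule has_integral_nonpos_interior) (use inside nonpos in auto)
  then show False using sr pq by simp
qed

lemma caratheodory_solution_downcrossing:
  assumes sol: "caratheodory_solution_on f x0 I x" and I: "is_interval I" "I \<subseteq> {0..}"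
    and bnd: "bounded (range f)" and ab: "a \<in> I" "b \<in> I" "a \<le> b"
    and pq: "q \<le> x a" "p < q" "x b \<le> p"
  shows "\<exists>z\<in>{p<..<q}. f z < 0"
proof -
  have "\<exists>z\<in>{- q<..<- p}. 0 < reflect f z"
    using caratheodory_solution_upcrossing[OF caratheodory_solution_on_reflect_iff[THEN iffD2, OF sol]
        I bounded_range_reflect[OF bnd] ab] pq by simp
  then obtain z where "- q < z" "z < - p" "0 < reflect f z" by auto
  then show ?thesis by (intro bexI[of _ "- z"]) (auto simp: reflect_def)
qed

(* A strict sign of f just above y would block the upward crossing on [a, b] or the downward
   crossing on [b, c]. *)
lemma caratheodory_solution_turn_right_lim_zero:
  assumes reg: "regulated f" and sol: "caratheodory_solution_on f x0 I x"
    and I: "is_interval I" "I \<subseteq> {0..}" and bnd: "bounded (range f)"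
    and abc: "a \<in> I" "b \<in> I" "c \<in> I" "a \<le> b" "b \<le> c"
    and y: "x a \<le> y" "x c \<le> y" "y < x b"
  shows "right_lim f y = 0"
proof (rule ccontr)
  assume "right_lim f y \<noteq> 0"
  then obtain e k where "y < e" "0 < k"
    and sign: "(\<forall>z\<in>{y<..<e}. k \<le> f z) \<or> (\<forall>z\<in>{y<..<e}. f z \<le> - k)"
    using regulated_sign_band_right[OF reg] by blast
  have band: "y < min e (x b)" "min e (x b) \<le> x b" using y \<open>y < e\<close> by auto
  from sign show False
  proof
    assume pos: "\<forall>z\<in>{y<..<e}. k \<le> f z"
    obtain z where "z \<in> {y<..<min e (x b)}" "f z < 0"
      using caratheodory_solution_downcrossing[OF sol I bnd abc(2,3,5) band(2,1) y(2)] by blast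
    then show False using pos \<open>0 < k\<close> by force
  next
    assume neg: "\<forall>z\<in>{y<..<e}. f z \<le> - k"
    obtain z where "z \<in> {y<..<min e (x b)}" "0 < f z"
      using caratheodory_solution_upcrossing[OF sol I bnd abc(1,2,4) y(1) band] by blast
    then show False using neg \<open>0 < k\<close> by force
  qed
qed

lemma caratheodory_solution_no_strict_peak:
  assumes A: "A1 f" "A2 f" and sol: "caratheodory_solution_on f x0 I x"
    and I: "is_interval I" "I \<subseteq> {0..}" and abc: "a \<in> I" "c \<in> I" "a < b" "b < c"
  shows "\<not> (x a < x b \<and> x c < x b)"
proof
  assume peak: "x a < x b \<and> x c < x b"
  have reg: "regulated f" and bnd: "bounded (range f)" using A(1) by (auto simp: A1_def)
  have "b \<in> I" using I(1) abc unfolding is_interval_1 by (meson less_imp_le)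
  define lo where "lo = max (x a) (x c)"
  have "f y = 0" if "lo < y" "y < x b" for y
  proof -
    have "right_lim f y = 0"
      by (rule caratheodory_solution_turn_right_lim_zero[OF reg sol I bnd abc(1) \<open>b \<in> I\<close> abc(2)])
        (use that abc in \<open>auto simp: lo_def\<close>)
    then show "f y = 0" using A(2) unfolding A2_def by simp
  qed
  moreover obtain z where "z \<in> {lo<..<x b}" "0 < f z"
    using caratheodory_solution_upcrossing[OF sol I bnd abc(1) \<open>b \<in> I\<close>, of lo "x b"] peak abc
    by (auto simp: lo_def)
  ultimately show False by force
qed

lemma caratheodory_solution_no_strict_valley:
  assumes "A1 f" "A2 f" and sol: "caratheodory_solution_on f x0 I x"
    and I: "is_interval I" "I \<subseteq> {0..}" and abc: "a \<in> I" "c \<in> I" "a < b" "b < c"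
  shows "\<not> (x b < x a \<and> x b < x c)"
  using caratheodory_solution_no_strict_peak[OF A1_reflect[OF assms(1)] A2_reflect[OF assms(1,2)]
      caratheodory_solution_on_reflect_iff[THEN iffD2, OF sol] I abc]
  by simp

lemma mono_on_or_antimono_on_if_no_turn:
  fixes x :: "real \<Rightarrow> real"
  assumes between: "\<And>a b c. a \<in> I \<Longrightarrow> b \<in> I \<Longrightarrow> c \<in> I \<Longrightarrow> a < b \<Longrightarrow> b < c \<Longrightarrow>
      min (x a) (x c) \<le> x b \<and> x b \<le> max (x a) (x c)"
  shows "mono_on I x \<or> antimono_on I x"
proof (rule ccontr)
  assume "\<not> (mono_on I x \<or> antimono_on I x)"
  then obtain u v u' v' where uv: "u \<in> I" "v \<in> I" "u \<le> v" "x v < x u"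
    and uv': "u' \<in> I" "v' \<in> I" "u' \<le> v'" "x u' < x v'"
    unfolding monotone_on_def by (auto simp: not_le)
  show False
    using between[of u v u'] between[of u v v'] between[of u u' v] between[of u v' v]
      between[of u' u v] between[of v' u v] between[of u' v' u] between[of u' v' v]
      between[of u' u v'] between[of u' v v'] between[of u u' v'] between[of v u' v']
    using uv uv' by (smt (verit) min_def max_def)
qed

lemma caratheodory_solution_monotone:
  assumes "A1 f" "A2 f" and sol: "caratheodory_solution_on f x0 I x"
    and I: "is_interval I" "I \<subseteq> {0..}"
  shows "mono_on I x \<or> antimono_on I x"
proof (rule mono_on_or_antimono_on_if_no_turn)
  fix a b c assume abc: "a \<in> I" "b \<in> I" "c \<in> I" "a < b" "b < c"
  have "\<not> (x a < x b \<and> x c < x b)" "\<not> (x b < x a \<and> x b < x c)"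
    using caratheodory_solution_no_strict_peak[OF assms] caratheodory_solution_no_strict_valley[OF assms]
      abc by blast+
  then show "min (x a) (x c) \<le> x b \<and> x b \<le> max (x a) (x c)"
    by (auto simp: min_le_iff_disj le_max_iff_disj)
qed


section \<open>Closedness under locally uniform limits\<close>

lemma uniform_limit_sequence_from_filter:
  fixes X :: "'i \<Rightarrow> 'a \<Rightarrow> 'b::metric_space"
  assumes "F \<noteq> bot" "eventually (\<lambda>i. P (X i)) F" "uniform_limit S X x F"
  shows "\<exists>Y. (\<forall>n. P (Y n)) \<and> uniform_limit S Y x sequentially"
proof -
  have "\<exists>i. P (X i) \<and> (\<forall>s\<in>S. dist (X i s) (x s) < 1 / Suc n)" for n
  proof -
    have "eventually (\<lambda>i. \<forall>s\<in>S. dist (X i s) (x s) < 1 / Suc n) F"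
      using assms(3) unfolding uniform_limit_iff by simp
    with assms(2) have "eventually (\<lambda>i. P (X i) \<and> (\<forall>s\<in>S. dist (X i s) (x s) < 1 / Suc n)) F"
      by (rule eventually_conj)
    then show ?thesis using eventually_happens'[OF assms(1)] by blast
  qed
  then obtain g where g: "\<And>n. P (X (g n))" "\<And>n s. s \<in> S \<Longrightarrow> dist (X (g n) s) (x s) < 1 / Suc n"
    by metis
  have "uniform_limit S (\<lambda>n. X (g n)) x sequentially"
    unfolding uniform_limit_iff
  proof (intro allI impI)
    fix e :: real assume "e > 0"
    have "eventually (\<lambda>n. 1 / real (Suc n) < e) sequentially"
      using order_tendstoD(2)[OF LIMSEQ_inverse_real_of_nat \<open>e > 0\<close>] by (simp add: inverse_eq_divide)
    then show "eventually (\<lambda>n. \<forall>s\<in>S. dist (X (g n) s) (x s) < e) sequentially"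
      by eventually_elim (use g(2) in \<open>auto intro: less_trans\<close>)
  qed
  then show ?thesis using g(1) by (intro exI[of _ "\<lambda>n. X (g n)"]) simp
qed

lemma mono_or_antimono_pointwise_limit:
  fixes Y :: "nat \<Rightarrow> real \<Rightarrow> real"
  assumes mono: "\<And>n. mono_on S (Y n) \<or> antimono_on S (Y n)"
    and lim: "\<And>s. s \<in> S \<Longrightarrow> (\<lambda>n. Y n s) \<longlonglongrightarrow> x s"
  shows "mono_on S x \<or> antimono_on S x"
proof (rule ccontr)
  assume "\<not> (mono_on S x \<or> antimono_on S x)"
  then obtain a b c d where ab: "a \<in> S" "b \<in> S" "a \<le> b" "x b < x a"
    and cd: "c \<in> S" "d \<in> S" "c \<le> d" "x c < x d"
    unfolding monotone_on_def by (auto simp: not_le)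
  have "eventually (\<lambda>n. Y n b < Y n a) sequentially"
    using order_tendstoD(1)[OF tendsto_diff[OF lim[OF ab(1)] lim[OF ab(2)]], of 0] ab(4) by simp
  moreover have "eventually (\<lambda>n. Y n c < Y n d) sequentially"
    using order_tendstoD(1)[OF tendsto_diff[OF lim[OF cd(2)] lim[OF cd(1)]], of 0] cd(4) by simp
  ultimately obtain n where "Y n b < Y n a" "Y n c < Y n d"
    using eventually_happens'[OF trivial_limit_sequentially eventually_conj] by blast
  then show False using mono[of n] ab cd unfolding monotone_on_def by force
qed

lemma mono_on_level_set_non_interior_finite:
  fixes x :: "real \<Rightarrow> real"
  assumes mono: "mono_on {0..t} x \<or> antimono_on {0..t} x"
  shows "finite ({s\<in>{0..t}. x s = y} - interior {s\<in>{0<..<t}. x s = y})"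
proof -
  define L where "L = {s\<in>{0..t}. x s = y}"
  have bdd: "bdd_below L" "bdd_above L"
    unfolding L_def by (auto intro: bdd_belowI[of _ 0] bdd_aboveI[of _ t])
  have "L - interior {s\<in>{0<..<t}. x s = y} \<subseteq> {Inf L, Sup L}"
  proof
    fix s assume s: "s \<in> L - interior {s\<in>{0<..<t}. x s = y}"
    show "s \<in> {Inf L, Sup L}"
    proof (rule ccontr)
      assume "s \<notin> {Inf L, Sup L}"
      moreover have "Inf L \<le> s" "s \<le> Sup L" using s bdd by (auto intro: cInf_lower cSup_upper)
      ultimately have "Inf L < s" "s < Sup L" by auto
      then obtain a c where ac: "a \<in> L" "a < s" "c \<in> L" "s < c"
        using s bdd by (metis DiffD1 cInf_less_iff less_cSup_iff empty_iff)
      have "x u = y" if "a \<le> u" "u \<le> c" for u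
      proof -
        have "u \<in> {0..t}" "a \<in> {0..t}" "c \<in> {0..t}" using ac that by (auto simp: L_def)
        then have "x a \<le> x u \<and> x u \<le> x c \<or> x c \<le> x u \<and> x u \<le> x a"
          using mono that unfolding monotone_on_def by blast
        then show ?thesis using ac by (auto simp: L_def)
      qed
      moreover have "0 \<le> a" "c \<le> t" using ac by (auto simp: L_def)
      ultimately have "{a<..<c} \<subseteq> {s\<in>{0<..<t}. x s = y}" by auto
      then have "s \<in> interior {s\<in>{0<..<t}. x s = y}"
        using ac by (intro interiorI[OF open_greaterThanLessThan]) auto
      then show False using s by blast
    qed
  qed
  then show ?thesis unfolding L_def by (rule finite_subset) simp
qed

lemma caratheodory_solution_displacement_in_band:
  assumes sol: "caratheodory_solution_on f x0 I x" and "I \<subseteq> {0..}" "a \<in> I" "b \<in> I" "a \<le> b"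
    and inside: "\<And>v. v \<in> {a..b} \<Longrightarrow> p < x v \<and> x v < q"
    and sign: "(\<forall>z\<in>{p<..<q}. k \<le> f z) \<or> (\<forall>z\<in>{p<..<q}. f z \<le> - k)"
  shows "k * (b - a) \<le> \<bar>x b - x a\<bar>"
proof -
  have int: "((\<lambda>v. f (x v)) has_integral (x b - x a)) {a..b}"
    using caratheodory_solution_has_integral[OF assms(1-5)] .
  have const: "((\<lambda>_. c) has_integral (c * (b - a))) {a..b}" for c
    using has_integral_const_real[of c a b] \<open>a \<le> b\<close> by (simp add: mult.commute)
  from sign show ?thesis
  proof
    assume "\<forall>z\<in>{p<..<q}. k \<le> f z"
    then have "k * (b - a) \<le> x b - x a"
      by (intro has_integral_le[OF const int]) (use inside in auto)
    then show ?thesis by linarith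
  next
    assume "\<forall>z\<in>{p<..<q}. f z \<le> - k"
    then have "x b - x a \<le> - k * (b - a)"
      by (intro has_integral_le[OF int const]) (use inside in auto)
    then show ?thesis by linarith
  qed
qed


lemma mono_on_or_antimono_on_interval_above:
  fixes g :: "real \<Rightarrow> real"
  assumes mono: "mono_on {0..} g \<or> antimono_on {0..} g" and "0 \<le> h" "0 \<le> u - h"
  obtains a b where "b - a = h" "u - h \<le> a" "b \<le> u + h" "\<And>v. v \<in> {a..b} \<Longrightarrow> g u \<le> g v"
proof (cases "mono_on {0..} g")
  case True
  have "g u \<le> g v" if "v \<in> {u..u + h}" for v
    using monotone_onD[OF True, of u v] that assms(2,3) by auto
  then show ?thesis using assms(2) by (intro that[where a = u and b = "u + h"]) auto
next
  case False
  then have anti: "antimono_on {0..} g" using mono by blast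
  have "g u \<le> g v" if "v \<in> {u - h..u}" for v
    using monotone_onD[OF anti, of v u] that assms(3) by auto
  then show ?thesis using assms(2) by (intro that[where a = "u - h" and b = u]) auto
qed

(* If Y n u > y, monotonicity keeps Y n inside the band (y, e) on an interval of length h, where
   |f| \<ge> k moves it by at least k h > 2 \<eta>, although it stays \<eta>-close to y. *)
lemma right_lim_nonzero_eventually_below:
  assumes A: "A1 f" "A2 f" and sols: "\<And>n. caratheodory_solution_on f x0 {0..} (Y n)"
    and h: "0 < h" "0 \<le> s - 2 * h"
    and lim: "uniform_limit {s - 2 * h..s + 2 * h} Y (\<lambda>_. y) sequentially"
    and nz: "right_lim f y \<noteq> 0"
  shows "eventually (\<lambda>n. \<forall>u\<in>{s - h..s + h}. Y n u \<le> y) sequentially"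
proof -
  have "regulated f" using A(1) by (simp add: A1_def)
  then obtain e k where "y < e" "0 < k" and sign: "(\<forall>z\<in>{y<..<e}. k \<le> f z) \<or> (\<forall>z\<in>{y<..<e}. f z \<le> - k)"
    using regulated_sign_band_right nz by blast
  define \<eta> where "\<eta> = min (e - y) (k * h / 2)"
  have "0 < \<eta>" using \<open>y < e\<close> \<open>0 < k\<close> h by (simp add: \<eta>_def)
  with lim have "eventually (\<lambda>n. \<forall>v\<in>{s - 2 * h..s + 2 * h}. dist (Y n v) y < \<eta>) sequentially"
    unfolding uniform_limit_iff by blast
  then show ?thesis
  proof eventually_elim
    case (elim n)
    then have close: "\<bar>Y n v - y\<bar> < \<eta>" if "v \<in> {s - 2 * h..s + 2 * h}" for v
      using that by (simp add: dist_real_def)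
    show ?case
    proof (intro ballI, rule ccontr)
      fix u assume u: "u \<in> {s - h..s + h}" and above: "\<not> Y n u \<le> y"
      have mono: "mono_on {0..} (Y n) \<or> antimono_on {0..} (Y n)"
        by (rule caratheodory_solution_monotone[OF A sols]) auto
      obtain a b where ab: "b - a = h" "u - h \<le> a" "b \<le> u + h"
        and rise: "\<And>v. v \<in> {a..b} \<Longrightarrow> Y n u \<le> Y n v"
        by (rule mono_on_or_antimono_on_interval_above[OF mono, where h = h and u = u]) (use u h in auto)
      have "a \<le> b" "0 \<le> a" using ab h u by auto
      have "k * (b - a) \<le> \<bar>Y n b - Y n a\<bar>"
      proof (rule caratheodory_solution_displacement_in_band[OF sols _ _ _ \<open>a \<le> b\<close> _ sign])
        fix v assume "v \<in> {a..b}"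
        then show "y < Y n v \<and> Y n v < e"
          using rise[of v] above close[of v] ab u by (auto simp: \<eta>_def)
      qed (use \<open>0 \<le> a\<close> \<open>a \<le> b\<close> in auto)
      moreover have "\<bar>Y n b - Y n a\<bar> < 2 * \<eta>"
        using close[of a] close[of b] ab u \<open>a \<le> b\<close> by auto
      moreover have "\<eta> \<le> k * h / 2" unfolding \<eta>_def by (rule min.cobounded2)
      ultimately show False using ab by simp
    qed
  qed
qed

lemma left_lim_nonzero_eventually_above:
  assumes A: "A1 f" "A2 f" and sols: "\<And>n. caratheodory_solution_on f x0 {0..} (Y n)"
    and h: "0 < h" "0 \<le> s - 2 * h"
    and lim: "uniform_limit {s - 2 * h..s + 2 * h} Y (\<lambda>_. y) sequentially"
    and nz: "left_lim f y \<noteq> 0"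
  shows "eventually (\<lambda>n. \<forall>u\<in>{s - h..s + h}. y \<le> Y n u) sequentially"
proof -
  have "right_lim (reflect f) (- y) \<noteq> 0"
    using nz A(1) by (simp add: A1_def right_lim_reflect)
  then have "eventually (\<lambda>n. \<forall>u\<in>{s - h..s + h}. - Y n u \<le> - y) sequentially"
    using right_lim_nonzero_eventually_below[OF A1_reflect[OF A(1)] A2_reflect[OF A]
        caratheodory_solution_on_reflect_iff[THEN iffD2, OF sols] h uniform_limit_uminus[OF lim]]
    by simp
  then show ?thesis by simp
qed


lemma plateau_level_zero:
  assumes A: "A1 f" "A2 f" and sols: "\<And>n. caratheodory_solution_on f x0 {0..} (Y n)"
    and h: "0 < h" "0 \<le> s - 2 * h"
    and lim: "uniform_limit {s - 2 * h..s + 2 * h} Y (\<lambda>_. y) sequentially"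
  shows "f y = 0"
proof (rule ccontr)
  assume "f y \<noteq> 0"
  then have nz: "left_lim f y \<noteq> 0" "right_lim f y \<noteq> 0" using A(2) unfolding A2_def by auto
  have "eventually (\<lambda>n. \<forall>u\<in>{s - h..s + h}. Y n u = y) sequentially"
    using eventually_conj[OF left_lim_nonzero_eventually_above[OF assms nz(1)]
        right_lim_nonzero_eventually_below[OF assms nz(2)]]
    by eventually_elim (auto intro: antisym)
  then obtain n where "\<forall>m\<ge>n. \<forall>u\<in>{s - h..s + h}. Y m u = y"
    unfolding eventually_sequentially by blast
  then have flat: "\<And>u. u \<in> {s - h..s + h} \<Longrightarrow> Y n u = y" by blast
  have "((\<lambda>v. f (Y n v)) has_integral (Y n (s + h) - Y n (s - h))) {s - h..s + h}"
    by (rule caratheodory_solution_has_integral[OF sols]) (use h in auto)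
  moreover have "((\<lambda>v. f (Y n v)) has_integral (f y * (2 * h))) {s - h..s + h}"
  proof -
    have "((\<lambda>_. f y) has_integral (f y * (2 * h))) {s - h..s + h}"
      using has_integral_const_real[of "f y" "s - h" "s + h"] h by (simp add: mult.commute)
    moreover have "((\<lambda>v. f (Y n v)) has_integral (f y * (2 * h))) {s - h..s + h} \<longleftrightarrow>
        ((\<lambda>_. f y) has_integral (f y * (2 * h))) {s - h..s + h}"
      by (rule has_integral_cong) (metis flat)
    ultimately show ?thesis by simp
  qed
  ultimately have "f y * (2 * h) = Y n (s + h) - Y n (s - h)" using has_integral_unique by blast
  also have "\<dots> = 0" using flat[of "s - h"] flat[of "s + h"] h by simp
  finally show False using \<open>f y \<noteq> 0\<close> h by simp
qed

lemma plateau_speed_tendsto_zero: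
  assumes A: "A1 f" "A2 f" and sols: "\<And>n. caratheodory_solution_on f x0 {0..} (Y n)"
    and h: "0 < h" "0 \<le> s - 2 * h"
    and lim: "uniform_limit {s - 2 * h..s + 2 * h} Y (\<lambda>_. y) sequentially"
  shows "(\<lambda>n. f (Y n s)) \<longlonglongrightarrow> 0"
proof (rule tendstoI)
  fix r :: real assume "0 < r"
  have reg: "regulated f" using A(1) by (simp add: A1_def)
  have fy: "f y = 0" by (rule plateau_level_zero[OF assms])
  obtain b1 where "b1 < y" and left: "\<And>z. b1 < z \<Longrightarrow> z < y \<Longrightarrow> \<bar>f z - left_lim f y\<bar> < r"
    using tendstoD[OF regulated_tendsto_left_lim[OF reg] \<open>0 < r\<close>, of y]
    unfolding eventually_at_left_field dist_real_def by blast
  obtain b2 where "y < b2" and right: "\<And>z. y < z \<Longrightarrow> z < b2 \<Longrightarrow> \<bar>f z - right_lim f y\<bar> < r"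
    using tendstoD[OF regulated_tendsto_right_lim[OF reg] \<open>0 < r\<close>, of y]
    unfolding eventually_at_right_field dist_real_def by blast
  have Ys: "(\<lambda>n. Y n s) \<longlonglongrightarrow> y" by (rule tendsto_uniform_limitI[OF lim]) (use h in auto)
  have "eventually (\<lambda>n. b1 < Y n s \<and> Y n s < b2) sequentially"
    using order_tendstoD(1)[OF Ys \<open>b1 < y\<close>] order_tendstoD(2)[OF Ys \<open>y < b2\<close>] by (rule eventually_conj)
  moreover have "eventually (\<lambda>n. right_lim f y = 0 \<or> Y n s \<le> y) sequentially"
  proof (cases "right_lim f y = 0")
    case False
    show ?thesis
      using right_lim_nonzero_eventually_below[OF assms False] by eventually_elim (use h in auto)
  qed simp
  moreover have "eventually (\<lambda>n. left_lim f y = 0 \<or> y \<le> Y n s) sequentially"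
  proof (cases "left_lim f y = 0")
    case False
    show ?thesis
      using left_lim_nonzero_eventually_above[OF assms False] by eventually_elim (use h in auto)
  qed simp
  ultimately show "eventually (\<lambda>n. dist (f (Y n s)) 0 < r) sequentially"
  proof eventually_elim
    case (elim n)
    consider "Y n s < y" | "Y n s = y" | "y < Y n s" by linarith
    then show ?case using elim left[of "Y n s"] right[of "Y n s"] fy \<open>0 < r\<close> by cases auto
  qed
qed

lemma uniform_limit_interior_level_set:
  fixes x :: "real \<Rightarrow> 'a::metric_space" and s t :: real
  assumes lim: "uniform_limit {0..t} Y x F"
    and s: "s \<in> interior {u\<in>{0<..<t}. x u = x s}"
  obtains h where "0 < h" "0 \<le> s - 2 * h" "uniform_limit {s - 2 * h..s + 2 * h} Y (\<lambda>_. x s) F"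
proof -
  obtain e where "0 < e" and ball: "ball s e \<subseteq> {u\<in>{0<..<t}. x u = x s}"
    using s unfolding mem_interior by blast
  define h where "h = e / 4"
  have "0 < h" using \<open>0 < e\<close> by (simp add: h_def)
  have "{s - 2 * h..s + 2 * h} \<subseteq> ball s e"
    using \<open>0 < e\<close> by (auto simp: h_def dist_real_def)
  with ball have level: "{s - 2 * h..s + 2 * h} \<subseteq> {u\<in>{0<..<t}. x u = x s}"
    by (rule order.trans[rotated])
  have "s - 2 * h \<in> {s - 2 * h..s + 2 * h}" using \<open>0 < h\<close> by simp
  then have "0 \<le> s - 2 * h" using level by fastforce
  have "uniform_limit {s - 2 * h..s + 2 * h} Y x F"
    by (rule uniform_limit_on_subset[OF lim order.trans[OF level]]) auto
  moreover have "uniform_limit {s - 2 * h..s + 2 * h} Y x F \<longleftrightarrow>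
      uniform_limit {s - 2 * h..s + 2 * h} Y (\<lambda>_. x s) F"
  proof (rule uniform_limit_cong)
    show "x v = x s" if "v \<in> {s - 2 * h..s + 2 * h}" for v
      using subsetD[OF level that] by simp
  qed simp
  ultimately show ?thesis using that \<open>0 < h\<close> \<open>0 \<le> s - 2 * h\<close> by blast
qed

lemma caratheodory_solution_limit_speed_converges:
  assumes A: "A1 f" "A2 f" and sols: "\<And>n. caratheodory_solution_on f x0 {0..} (Y n)"
    and lim: "uniform_limit {0..t} Y x sequentially"
  shows "\<exists>N. countable N \<and> (\<forall>s\<in>{0..t} - N. (\<lambda>n. f (Y n s)) \<longlonglongrightarrow> f (x s))"
proof -
  have conv: "(\<lambda>n. Y n s) \<longlonglongrightarrow> x s" if "s \<in> {0..t}" for s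
    using tendsto_uniform_limitI[OF lim that] .
  have "mono_on {0..} (Y n) \<or> antimono_on {0..} (Y n)" for n
    by (rule caratheodory_solution_monotone[OF A sols]) auto
  then have "mono_on {0..t} (Y n) \<or> antimono_on {0..t} (Y n)" for n
    by (meson atLeastAtMost_iff atLeast_iff monotone_on_subset subsetI)
  then have mono: "mono_on {0..t} x \<or> antimono_on {0..t} x"
    by (rule mono_or_antimono_pointwise_limit) (rule conv)
  define D where "D = {y. \<not> isCont f y}"
  define N where "N = (\<Union>y\<in>D. {s\<in>{0..t}. x s = y} - interior {s\<in>{0<..<t}. x s = y})"
  have "countable D"
    unfolding D_def by (rule regulated_countable_discontinuities) (use A(1) in \<open>simp add: A1_def\<close>)
  then have "countable N"
    unfolding N_def
    by (intro countable_UN \<open>countable D\<close> countable_finite mono_on_level_set_non_interior_finite[OF mono])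
  moreover have "(\<lambda>n. f (Y n s)) \<longlonglongrightarrow> f (x s)" if s: "s \<in> {0..t} - N" for s
  proof (cases "isCont f (x s)")
    case True
    then show ?thesis using isCont_tendsto_compose conv s by blast
  next
    case False
    then have "s \<in> interior {u\<in>{0<..<t}. x u = x s}" using s by (auto simp: N_def D_def)
    then obtain h where h: "0 < h" "0 \<le> s - 2 * h"
      and plateau: "uniform_limit {s - 2 * h..s + 2 * h} Y (\<lambda>_. x s) sequentially"
      by (rule uniform_limit_interior_level_set[OF lim])
    show ?thesis
      using plateau_level_zero[OF A sols h plateau] plateau_speed_tendsto_zero[OF A sols h plateau]
      by simp
  qed
  ultimately show ?thesis by blast
qed

lemma caratheodory_solution_limit_has_integral:
  assumes A: "A1 f" "A2 f" and "0 \<le> t" and sols: "\<And>n. caratheodory_solution_on f x0 {0..} (Y n)"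
    and lim: "uniform_limit {0..t} Y x sequentially"
  shows "((\<lambda>s. f (x s)) has_integral (x t - x0)) {0..t}"
proof -
  obtain N where "countable N" and conv: "\<forall>s\<in>{0..t} - N. (\<lambda>n. f (Y n s)) \<longlonglongrightarrow> f (x s)"
    using caratheodory_solution_limit_speed_converges[OF A sols lim] by blast
  have negN: "negligible N" by (rule countable_imp_negligible) fact
  obtain B where B: "\<And>z. \<bar>f z\<bar> \<le> B" using A(1) unfolding A1_def bounded_iff by fastforce
  define g where "g n s = (if s \<in> N then 0 else f (Y n s))" for n s
  define G where "G s = (if s \<in> N then 0 else f (x s))" for s
  have g: "(g n has_integral (Y n t - x0)) {0..t}" for n
  proof -
    have "((\<lambda>s. f (Y n s)) has_integral (Y n t - x0)) {0..t}"
      using sols[of n] \<open>0 \<le> t\<close> unfolding caratheodory_solution_on_def by auto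
    then show ?thesis by (rule has_integral_spike[OF negN, rotated]) (auto simp: g_def)
  qed
  have g_int: "g n integrable_on {0..t}" for n using g by blast
  have B_int: "(\<lambda>_. B) integrable_on {0..t}" by (rule integrable_const_ivl)
  have dom: "norm (g n s) \<le> B" for n s
    using B[of 0] B[of "Y n s"] unfolding g_def by (cases "s \<in> N") auto
  have g_lim: "(\<lambda>n. g n s) \<longlonglongrightarrow> G s" if "s \<in> {0..t}" for s
    using conv that by (auto simp: g_def G_def)
  have "G integrable_on {0..t}"
    using dominated_convergence(1)[OF g_int B_int dom g_lim] .
  have "(\<lambda>n. integral {0..t} (g n)) \<longlonglongrightarrow> integral {0..t} G"
    using dominated_convergence(2)[OF g_int B_int dom g_lim] .
  moreover have "(\<lambda>n. integral {0..t} (g n)) \<longlonglongrightarrow> x t - x0"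
    using tendsto_diff[OF tendsto_uniform_limitI[OF lim] tendsto_const, of t x0] \<open>0 \<le> t\<close>
    by (simp add: integral_unique[OF g])
  ultimately have "integral {0..t} G = x t - x0" using LIMSEQ_unique by blast
  then have "(G has_integral (x t - x0)) {0..t}"
    using \<open>G integrable_on {0..t}\<close> by (simp add: has_integral_integral)
  then show ?thesis by (rule has_integral_spike[OF negN, rotated]) (auto simp: G_def)
qed

lemma caratheodory_solutions_closed:
  assumes A: "A1 f" "A2 f" and "F \<noteq> bot"
    and sols: "eventually (\<lambda>i. caratheodory_solution_on f x0 {0..} (X i)) F"
    and lim: "\<forall>T\<ge>0. uniform_limit {0..T} X x F"
  shows "caratheodory_solution_on f x0 {0..} x"
  unfolding caratheodory_solution_on_def
proof
  fix t :: real assume "t \<in> {0..}"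
  then have "0 \<le> t" by simp
  then obtain Y where "\<And>n. caratheodory_solution_on f x0 {0..} (Y n)"
    and "uniform_limit {0..t} Y x sequentially"
    using uniform_limit_sequence_from_filter[OF \<open>F \<noteq> bot\<close> sols lim[rule_format, OF \<open>0 \<le> t\<close>]]
    by auto
  then show "((\<lambda>s. f (x s)) has_integral (x t - x0)) {0..t}"
    by (rule caratheodory_solution_limit_has_integral[OF A \<open>0 \<le> t\<close>])
qed


section \<open>Existence of solutions\<close>

lemma integrable_on_bounded_continuous_off_negligible:
  fixes g :: "real \<Rightarrow> real"
  assumes "negligible D" "\<And>w. w \<notin> D \<Longrightarrow> isCont g w" "\<And>w. \<bar>g w\<bar> \<le> M"
  shows "g integrable_on {a..b}"
proof -
  define S where "S = {a..b} - D"
  have S: "S \<in> sets lebesgue"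
    unfolding S_def using fmeasurableD[OF lmeasurable_interval(1)] negligible_imp_sets[OF assms(1)]
    by blast
  have "continuous_on S g"
    by (rule continuous_at_imp_continuous_on) (use assms(2) in \<open>auto simp: S_def\<close>)
  then have "g \<in> borel_measurable (lebesgue_on S)"
    using continuous_imp_measurable_on_sets_lebesgue S by blast
  moreover have "(\<lambda>_. M) integrable_on S"
    by (rule integrable_spike_set[OF integrable_const_ivl[of M a b]])
      (auto simp: S_def intro: negligible_subset[OF assms(1)])
  ultimately have "g integrable_on S"
    using measurable_bounded_by_integrable_imp_integrable_real S assms(3) by blast
  then show ?thesis
    by (rule integrable_spike_set) (auto simp: S_def intro: negligible_subset[OF assms(1)])
qed

lemma regulated_local_lower_bound:
  assumes reg: "regulated f" and R: "0 < right_lim f l" and L: "a < l \<Longrightarrow> 0 < left_lim f l"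
  shows "\<exists>c>0. eventually (\<lambda>w. a \<le> w \<longrightarrow> isCont f w \<longrightarrow> c \<le> f w) (nhds l)"
proof -
  define c where "c = (if a < l then min (right_lim f l) (left_lim f l) else right_lim f l) / 2"
  have "0 < c" using R L by (simp add: c_def)
  have cR: "c < right_lim f l" and cL: "a < l \<Longrightarrow> c < left_lim f l"
    using R L by (auto simp: c_def min_def)
  have "eventually (\<lambda>w. c < f w) (at_right l)"
    by (rule order_tendstoD(1)[OF regulated_tendsto_right_lim[OF reg] cR])
  moreover have "eventually (\<lambda>w. a \<le> w \<longrightarrow> c < f w) (at_left l)"
  proof (cases "a < l")
    case True
    have "eventually (\<lambda>w. c < f w) (at_left l)"
      by (rule order_tendstoD(1)[OF regulated_tendsto_left_lim[OF reg] cL[OF True]])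
    then show ?thesis by (rule eventually_mono) simp
  next
    case False
    have "eventually (\<lambda>w. w < l) (at_left l)" by (simp add: eventually_at_filter)
    then show ?thesis by (rule eventually_mono) (use False in auto)
  qed
  moreover have "isCont f l \<longrightarrow> c \<le> f l"
    using isCont_right_lim[where f = f and y = l] cR by auto
  ultimately have "eventually (\<lambda>w. a \<le> w \<longrightarrow> isCont f w \<longrightarrow> c \<le> f w) (nhds l)"
    unfolding eventually_nhds_conv_at eventually_at_split
    by (auto elim!: eventually_mono)
  then show ?thesis using \<open>0 < c\<close> by blast
qed

lemma regulated_lower_bound_on_continuity_points:
  assumes reg: "regulated f"
    and R: "\<And>w. w \<in> {a..b} \<Longrightarrow> 0 < right_lim f w" and L: "\<And>w. w \<in> {a<..b} \<Longrightarrow> 0 < left_lim f w"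
  shows "\<exists>c>0. \<forall>w\<in>{a..b}. isCont f w \<longrightarrow> c \<le> f w"
proof -
  have "\<forall>l\<in>{a..b}. \<exists>c U. 0 < c \<and> open U \<and> l \<in> U \<and> (\<forall>w\<in>U. a \<le> w \<longrightarrow> isCont f w \<longrightarrow> c \<le> f w)"
  proof
    fix l assume "l \<in> {a..b}"
    then obtain c where "0 < c" "eventually (\<lambda>w. a \<le> w \<longrightarrow> isCont f w \<longrightarrow> c \<le> f w) (nhds l)"
      using regulated_local_lower_bound[OF reg R, of l a] L by auto
    then show "\<exists>c U. 0 < c \<and> open U \<and> l \<in> U \<and> (\<forall>w\<in>U. a \<le> w \<longrightarrow> isCont f w \<longrightarrow> c \<le> f w)"
      unfolding eventually_nhds by blast
  qed
  then obtain c U where cU: "\<And>l. l \<in> {a..b} \<Longrightarrow>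
      0 < c l \<and> open (U l) \<and> l \<in> U l \<and> (\<forall>w\<in>U l. a \<le> w \<longrightarrow> isCont f w \<longrightarrow> c l \<le> f w)"
    by metis
  obtain K where K: "K \<subseteq> {a..b}" "finite K" "{a..b} \<subseteq> (\<Union>l\<in>K. U l)"
    by (rule compactE_image[OF compact_Icc, of "{a..b}" U]) (use cU in blast)+
  show ?thesis
  proof (cases "K = {}")
    case True
    then show ?thesis using K(3) by (intro exI[of _ 1]) auto
  next
    case False
    show ?thesis
    proof (intro exI[of _ "Min (c ` K)"] conjI ballI impI)
      show "0 < Min (c ` K)" using K cU False by auto
      fix w assume "w \<in> {a..b}" "isCont f w"
      then obtain l where "l \<in> K" "w \<in> U l" using K(3) by blast
      then have "c l \<le> f w" using cU[of l] K(1) \<open>w \<in> {a..b}\<close> \<open>isCont f w\<close> by auto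
      then show "Min (c ` K) \<le> f w" using \<open>l \<in> K\<close> K(2) by (meson Min_le finite_imageI image_eqI order.trans)
    qed
  qed
qed


lemma regulated_inverse_max_integrable:
  assumes "regulated f" "0 < c"
  shows "(\<lambda>w. 1 / max (f w) c) integrable_on {a..b}"
proof (rule integrable_on_bounded_continuous_off_negligible)
  show "negligible {w. \<not> isCont f w}"
    by (rule countable_imp_negligible[OF regulated_countable_discontinuities[OF assms(1)]])
  show "isCont (\<lambda>w. 1 / max (f w) c) w" if "w \<notin> {w. \<not> isCont f w}" for w
    using that assms(2) by (intro continuous_intros) auto
  show "\<bar>1 / max (f w) c\<bar> \<le> 1 / c" for w using assms(2) by (simp add: frac_le)
qed

lemma has_integral_one_diff_negligible:
  fixes a b :: real
  assumes "negligible D" "a \<le> b"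
  shows "((\<lambda>_. 1::real) has_integral (b - a)) ({a<..<b} - D)"
proof -
  have "((\<lambda>_. 1::real) has_integral (b - a)) {a..b}"
    using has_integral_const_real[of "1::real" a b] assms(2) by simp
  moreover have "negligible {w \<in> {a..b} - ({a<..<b} - D). (1::real) \<noteq> 0}"
    by (rule negligible_subset[of "{a, b} \<union> D"]) (use assms(1) in auto)
  moreover have "{w \<in> ({a<..<b} - D) - {a..b}. (1::real) \<noteq> 0} = {}" by auto
  then have "negligible {w \<in> ({a<..<b} - D) - {a..b}. (1::real) \<noteq> 0}" by (simp only: negligible_empty)
  ultimately show ?thesis
    using has_integral_spike_set_eq[where f = "\<lambda>_. 1::real" and S = "{a..b}" and T = "{a<..<b} - D"]
    by blast
qed

definition rising_range :: "(real \<Rightarrow> real) \<Rightarrow> real \<Rightarrow> real set" where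
  "rising_range f x0 = {z. x0 \<le> z \<and> (\<forall>w\<in>{x0<..z}. 0 < left_lim f w \<and> 0 < right_lim f w)}"

(* The value at the countably many discontinuities does not affect the integral; choosing 1 / B
   there keeps the pointwise lower bound 1 / B. *)
definition inverse_speed :: "(real \<Rightarrow> real) \<Rightarrow> real \<Rightarrow> real \<Rightarrow> real" where
  "inverse_speed f B w = (if isCont f w then 1 / f w else 1 / B)"

definition arrival_time :: "(real \<Rightarrow> real) \<Rightarrow> real \<Rightarrow> real \<Rightarrow> real \<Rightarrow> real" where
  "arrival_time f B x0 z = integral {x0..z} (inverse_speed f B)"

(* While the solution rises it is the inverse of the arrival time; afterwards it rests at the
   supremum of the rising range, a zero of f. *)
definition rising_solution :: "(real \<Rightarrow> real) \<Rightarrow> real \<Rightarrow> real \<Rightarrow> real \<Rightarrow> real" where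
  "rising_solution f B x0 t =
     (if t \<in> arrival_time f B x0 ` rising_range f x0
      then inv_into (rising_range f x0) (arrival_time f B x0) t else Sup (rising_range f x0))"

context
  fixes f :: "real \<Rightarrow> real" and x0 B :: real
  assumes reg: "regulated f" and B: "0 < B" "\<And>z. \<bar>f z\<bar> \<le> B" and start: "0 < right_lim f x0"
begin

abbreviation "reach \<equiv> rising_range f x0"
abbreviation "time \<equiv> arrival_time f B x0"

lemma start_in_reach: "x0 \<in> reach"
  by (simp add: rising_range_def)

lemma reach_ge: "z \<in> reach \<Longrightarrow> x0 \<le> z"
  by (simp add: rising_range_def)

lemma reach_downward_closed: "z \<in> reach \<Longrightarrow> x0 \<le> w \<Longrightarrow> w \<le> z \<Longrightarrow> w \<in> reach"
  by (auto simp: rising_range_def)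

lemma reach_left_lim_pos: "z \<in> reach \<Longrightarrow> w \<in> {x0<..z} \<Longrightarrow> 0 < left_lim f w"
  by (simp add: rising_range_def)

lemma reach_right_lim_pos: "z \<in> reach \<Longrightarrow> w \<in> {x0..z} \<Longrightarrow> 0 < right_lim f w"
  using start by (cases "w = x0") (auto simp: rising_range_def)

lemma reach_extends: "z \<in> reach \<Longrightarrow> \<exists>z'>z. z' \<in> reach"
proof -
  assume z: "z \<in> reach"
  have "0 < right_lim f z" using reach_right_lim_pos[OF z] reach_ge[OF z] by simp
  then have "eventually (\<lambda>w. right_lim f z / 2 < f w) (at_right z)"
    by (intro order_tendstoD(1)[OF regulated_tendsto_right_lim[OF reg]]) simp
  then obtain b where "z < b" and b: "\<And>w. z < w \<Longrightarrow> w < b \<Longrightarrow> right_lim f z / 2 < f w"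
    unfolding eventually_at_right_field by blast
  have "0 < left_lim f w \<and> 0 < right_lim f w" if "z < w" "w < b" for w
  proof -
    have "eventually (\<lambda>v. v \<in> {z<..<b}) (at w)"
      by (rule eventually_at_in_open') (use that in auto)
    then have near: "eventually (\<lambda>v. right_lim f z / 2 \<le> f v) (at w)"
      by eventually_elim (use b in \<open>auto intro: less_imp_le\<close>)
    have "right_lim f z / 2 \<le> left_lim f w"
      by (rule tendsto_lowerbound[OF regulated_tendsto_left_lim[OF reg]])
        (use near in \<open>simp_all add: eventually_at_split\<close>)
    moreover have "right_lim f z / 2 \<le> right_lim f w"
      by (rule tendsto_lowerbound[OF regulated_tendsto_right_lim[OF reg]])
        (use near in \<open>simp_all add: eventually_at_split\<close>)
    ultimately show ?thesis using \<open>0 < right_lim f z\<close> by linarith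
  qed
  then have "(z + b) / 2 \<in> reach"
    using z \<open>z < b\<close> reach_ge[OF z] unfolding rising_range_def
    by (auto simp: not_le)
  then show ?thesis using \<open>z < b\<close> by (intro exI[of _ "(z + b) / 2"]) auto
qed

lemma reach_lower_bound: "z \<in> reach \<Longrightarrow> \<exists>c>0. \<forall>w\<in>{x0..z}. isCont f w \<longrightarrow> c \<le> f w"
  by (rule regulated_lower_bound_on_continuity_points[OF reg])
    (auto intro: reach_right_lim_pos reach_left_lim_pos)

lemma inverse_speed_ge: "z \<in> reach \<Longrightarrow> w \<in> {x0..z} \<Longrightarrow> 1 / B \<le> inverse_speed f B w"
  using reach_right_lim_pos[of z w] isCont_right_lim[where f = f and y = w] B(2)[of w]
  by (auto simp: inverse_speed_def frac_le)

lemma inverse_speed_eq: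
  assumes "0 < c" "\<forall>w\<in>{x0..z}. isCont f w \<longrightarrow> c \<le> f w" "w \<in> {x0..z}" "isCont f w"
  shows "inverse_speed f B w = 1 / max (f w) c"
proof -
  have "c \<le> f w" using assms(2-4) by blast
  then show ?thesis using assms(4) by (simp add: inverse_speed_def max_def)
qed

lemma inverse_speed_integrable:
  assumes "0 < c" "\<forall>w\<in>{x0..z}. isCont f w \<longrightarrow> c \<le> f w"
  shows "inverse_speed f B integrable_on {x0..z}"
    and "\<And>v. v \<le> z \<Longrightarrow> integral {x0..v} (inverse_speed f B) = integral {x0..v} (\<lambda>w. 1 / max (f w) c)"
proof -
  have negD: "negligible {w. \<not> isCont f w}"
    by (rule countable_imp_negligible[OF regulated_countable_discontinuities[OF reg]])
  show "inverse_speed f B integrable_on {x0..z}"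
    by (rule integrable_spike[OF regulated_inverse_max_integrable[OF reg assms(1)] negD])
      (use inverse_speed_eq[OF assms] in auto)
  show "integral {x0..v} (inverse_speed f B) = integral {x0..v} (\<lambda>w. 1 / max (f w) c)" if "v \<le> z" for v
    by (rule integral_spike[OF negD]) (use inverse_speed_eq[OF assms] that in auto)
qed

lemma arrival_time_start [simp]: "time x0 = 0"
  by (simp add: arrival_time_def)

lemma arrival_time_split:
  assumes v: "v \<in> reach" and "x0 \<le> u" "u \<le> v"
  shows "time v = time u + integral {u..v} (inverse_speed f B)"
proof -
  obtain c where c: "0 < c" "\<forall>w\<in>{x0..v}. isCont f w \<longrightarrow> c \<le> f w" using reach_lower_bound[OF v] by blast
  have int: "inverse_speed f B integrable_on {x0..v}" using inverse_speed_integrable(1)[OF c] .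
  have "(inverse_speed f B has_integral time u + integral {u..v} (inverse_speed f B)) {x0..v}"
    unfolding arrival_time_def
    by (intro has_integral_combine[OF assms(2,3)] integrable_integral integrable_subinterval_real[OF int])
      (use assms in auto)
  then show ?thesis unfolding arrival_time_def by (rule integral_unique)
qed

lemma arrival_time_increment_ge:
  assumes v: "v \<in> reach" and "x0 \<le> u" "u \<le> v"
  shows "(v - u) / B \<le> time v - time u"
proof -
  obtain c where c: "0 < c" "\<forall>w\<in>{x0..v}. isCont f w \<longrightarrow> c \<le> f w" using reach_lower_bound[OF v] by blast
  have "inverse_speed f B integrable_on {u..v}"
    using integrable_subinterval_real[OF inverse_speed_integrable(1)[OF c]] assms by auto
  then have "(1 / B) * (v - u) \<le> integral {u..v} (inverse_speed f B)"
    using has_integral_const_real[of "1 / B" u v] inverse_speed_ge[OF v] assms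
    by (intro has_integral_le[OF _ integrable_integral]) (auto simp: mult.commute)
  then show ?thesis using arrival_time_split[OF assms] by simp
qed

lemma arrival_time_increment_le:
  assumes z: "z \<in> reach"
  obtains M where "0 \<le> M" "\<And>u v. x0 \<le> u \<Longrightarrow> u \<le> v \<Longrightarrow> v \<le> z \<Longrightarrow> time v - time u \<le> M * (v - u)"
proof -
  obtain c where c: "0 < c" "\<forall>w\<in>{x0..z}. isCont f w \<longrightarrow> c \<le> f w" using reach_lower_bound[OF z] by blast
  define M where "M = max (1 / c) (1 / B)"
  have speed: "inverse_speed f B w \<le> M" if "w \<in> {x0..z}" for w
  proof (cases "isCont f w")
    case True
    then have "c \<le> f w" using c(2) that by blast
    then have "1 / f w \<le> 1 / c" using c(1) by (simp add: frac_le)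
    then show ?thesis using True by (simp add: inverse_speed_def M_def)
  qed (simp add: inverse_speed_def M_def)
  have "time v - time u \<le> M * (v - u)" if uv: "x0 \<le> u" "u \<le> v" "v \<le> z" for u v
  proof -
    have "inverse_speed f B integrable_on {u..v}"
      using integrable_subinterval_real[OF inverse_speed_integrable(1)[OF c]] uv by auto
    then have "integral {u..v} (inverse_speed f B) \<le> M * (v - u)"
      using has_integral_const_real[of M u v] speed uv
      by (intro has_integral_le[OF integrable_integral]) (auto simp: mult.commute)
    then show ?thesis
      using arrival_time_split[OF reach_downward_closed[OF z] uv(1,2)] uv by simp
  qed
  moreover have "0 \<le> M" using c(1) by (simp add: M_def le_max_iff_disj)
  ultimately show ?thesis using that by blast
qed

lemma arrival_time_less:
  assumes "v \<in> reach" "x0 \<le> u" "u < v"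
  shows "time u < time v"
proof -
  have "0 < (v - u) / B" using assms(3) B(1) by simp
  then show ?thesis using arrival_time_increment_ge[OF assms(1,2)] assms(3) by linarith
qed

lemma arrival_time_mono: "v \<in> reach \<Longrightarrow> x0 \<le> u \<Longrightarrow> u \<le> v \<Longrightarrow> time u \<le> time v"
  using arrival_time_less[of v u] by (cases "u = v") auto

lemma arrival_time_inj: "inj_on time reach"
proof (rule inj_onI, rule ccontr)
  fix u v assume "u \<in> reach" "v \<in> reach" "time u = time v" "u \<noteq> v"
  then show False
    using arrival_time_less[of v u] arrival_time_less[of u v] reach_ge by (cases "u < v") auto
qed

lemma arrival_time_continuous_on: "z \<in> reach \<Longrightarrow> continuous_on {x0..z} time"
proof -
  assume z: "z \<in> reach"
  obtain M where "0 \<le> M"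
    and M: "\<And>u v. x0 \<le> u \<Longrightarrow> u \<le> v \<Longrightarrow> v \<le> z \<Longrightarrow> time v - time u \<le> M * (v - u)"
    using arrival_time_increment_le[OF z] by blast
  have le: "\<bar>time v - time u\<bar> \<le> M * \<bar>v - u\<bar>" if "u \<in> {x0..z}" "v \<in> {x0..z}" "u \<le> v" for u v
    using M[of u v] arrival_time_mono[OF reach_downward_closed[OF z], of v u] that by auto
  have "M-lipschitz_on {x0..z} time"
  proof (rule lipschitz_onI)
    fix u v assume "u \<in> {x0..z}" "v \<in> {x0..z}"
    then show "dist (time u) (time v) \<le> M * dist u v"
      using le[of u v] le[of v u] by (cases "u \<le> v") (auto simp: dist_real_def abs_minus_commute)
  qed fact
  then show ?thesis by (rule lipschitz_on_continuous_on)
qed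

lemma arrival_time_attains:
  assumes "z \<in> reach" "0 \<le> s" "s \<le> time z"
  shows "\<exists>w\<in>{x0..z}. time w = s"
  using IVT'[of time x0 s z, OF _ assms(3) reach_ge[OF assms(1)] arrival_time_continuous_on[OF assms(1)]]
    assms(2) by auto

lemma arrival_time_has_derivative:
  assumes z: "z \<in> reach" and w: "x0 < w" "w < z" "isCont f w"
  shows "(time has_real_derivative (1 / f w)) (at w)"
proof -
  obtain c where c: "0 < c" "\<forall>w\<in>{x0..z}. isCont f w \<longrightarrow> c \<le> f w" using reach_lower_bound[OF z] by blast
  have ic: "isCont (\<lambda>u. 1 / max (f u) c) w"
    using c(1) w(3) by (intro continuous_intros) auto
  have "((\<lambda>u. integral {x0..u} (\<lambda>w. 1 / max (f w) c)) has_vector_derivative (1 / max (f w) c))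
      (at w within {x0..z} - {})"
  proof (rule integral_has_vector_derivative_continuous_at)
    show "(\<lambda>w. 1 / max (f w) c) integrable_on {x0..z}" by (rule regulated_inverse_max_integrable[OF reg c(1)])
    show "w \<in> {x0..z} - {}" using w by simp
    show "continuous (at w within {x0..z} - {}) (\<lambda>w. 1 / max (f w) c)"
      by (rule continuous_at_imp_continuous_within[OF ic])
  qed simp
  then have "((\<lambda>u. integral {x0..u} (\<lambda>w. 1 / max (f w) c)) has_vector_derivative (1 / max (f w) c))
      (at w within {x0..z})"
    by simp
  then have "(time has_vector_derivative (1 / max (f w) c)) (at w within {x0..z})"
  proof (rule has_vector_derivative_transform_within[OF _ zero_less_one])
    show "w \<in> {x0..z}" using w by simp
    show "integral {x0..v} (\<lambda>w. 1 / max (f w) c) = time v" if "v \<in> {x0..z}" for v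
      using inverse_speed_integrable(2)[OF c, of v] that by (simp add: arrival_time_def)
  qed
  then have "(time has_vector_derivative (1 / max (f w) c)) (at w)"
    using at_within_Icc_at[OF w(1,2)] by simp
  moreover have "max (f w) c = f w" using c w by auto
  ultimately show ?thesis by (simp add: has_real_derivative_iff_has_vector_derivative)
qed


lemma rising_solution_arrival_time: "w \<in> reach \<Longrightarrow> rising_solution f B x0 (time w) = w"
  by (simp add: rising_solution_def arrival_time_inj)

lemma rising_solution_has_integral_on_image:
  assumes sub: "{x0<..<c} \<subseteq> reach" and "x0 \<le> c"
  shows "((\<lambda>s. f (rising_solution f B x0 s)) has_integral (c - x0))
    (time ` ({x0<..<c} - {w. \<not> isCont f w}))"
proof -
  let ?x = "rising_solution f B x0"
  define S where "S = {x0<..<c} - {w. \<not> isCont f w}"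
  have negD: "negligible {w. \<not> isCont f w}"
    by (rule countable_imp_negligible[OF regulated_countable_discontinuities[OF reg]])
  have S: "S \<in> sets lebesgue"
    unfolding S_def using fmeasurableD[OF lmeasurable_interval(2)] negligible_imp_sets[OF negD] by blast
  have der: "(time has_real_derivative (1 / f w)) (at w within S)" if "w \<in> S" for w
  proof -
    have "(w + c) / 2 \<in> reach" using sub that by (auto simp: S_def)
    then have "(time has_real_derivative (1 / f w)) (at w)"
      by (rule arrival_time_has_derivative) (use that in \<open>auto simp: S_def\<close>)
    then show ?thesis by (rule has_field_derivative_at_within)
  qed
  have inj: "inj_on time S"
    by (rule inj_on_subset[OF arrival_time_inj]) (use sub in \<open>auto simp: S_def\<close>)
  have one: "\<bar>1 / f w\<bar> * f (?x (time w)) = 1" if "w \<in> S" for w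
  proof -
    have w: "w \<in> reach" "isCont f w" using that sub by (auto simp: S_def)
    have "0 < f w"
      using reach_right_lim_pos[OF w(1), of w] reach_ge[OF w(1)] isCont_right_lim[OF w(2)] by simp
    then show ?thesis by (simp add: rising_solution_arrival_time[OF w(1)])
  qed
  have "((\<lambda>w. \<bar>1 / f w\<bar> * f (?x (time w))) has_integral (c - x0)) S"
    using has_integral_one_diff_negligible[OF negD \<open>x0 \<le> c\<close>]
      has_integral_cong[of S "\<lambda>w. \<bar>1 / f w\<bar> * f (?x (time w))" "\<lambda>_. 1"] one
    by (simp add: S_def)
  then have "(\<lambda>w. \<bar>1 / f w\<bar> * f (?x (time w))) absolutely_integrable_on S \<and>
      integral S (\<lambda>w. \<bar>1 / f w\<bar> * f (?x (time w))) = c - x0"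
    using one by (auto intro: nonnegative_absolutely_integrable_1 simp: integral_unique)
  then have "(\<lambda>s. f (?x s)) absolutely_integrable_on time ` S \<and> integral (time ` S) (\<lambda>s. f (?x s)) = c - x0"
    using has_absolute_integral_change_of_variables_1'[OF S der inj] by blast
  then show ?thesis
    unfolding S_def[symmetric] using set_lebesgue_integral_eq_integral(1) has_integral_integral by metis
qed

lemma rising_solution_has_integral:
  assumes sub: "{x0<..<c} \<subseteq> reach" and "x0 \<le> c" and img: "time ` {x0<..<c} = {0<..<\<tau>}"
  shows "((\<lambda>s. f (rising_solution f B x0 s)) has_integral (c - x0)) {0..\<tau>}"
proof -
  let ?x = "rising_solution f B x0"
  define D where "D = {w. \<not> isCont f w}"
  have "countable D" unfolding D_def by (rule regulated_countable_discontinuities[OF reg])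
  have "time ` ({x0<..<c} - D) \<subseteq> time ` {x0<..<c}" by (rule image_mono) blast
  also have "\<dots> \<subseteq> {0..\<tau>}" unfolding img by auto
  finally have "{s \<in> time ` ({x0<..<c} - D) - {0..\<tau>}. f (?x s) \<noteq> 0} = {}" by blast
  then have "negligible {s \<in> time ` ({x0<..<c} - D) - {0..\<tau>}. f (?x s) \<noteq> 0}"
    by (simp only: negligible_empty)
  moreover have "negligible {s \<in> {0..\<tau>} - time ` ({x0<..<c} - D). f (?x s) \<noteq> 0}"
  proof (rule negligible_subset)
    show "negligible ({0, \<tau>} \<union> time ` D)"
      using countable_imp_negligible[OF countable_image[OF \<open>countable D\<close>]] by simp
    show "{s \<in> {0..\<tau>} - time ` ({x0<..<c} - D). f (?x s) \<noteq> 0} \<subseteq> {0, \<tau>} \<union> time ` D"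
    proof
      fix s assume s: "s \<in> {s \<in> {0..\<tau>} - time ` ({x0<..<c} - D). f (?x s) \<noteq> 0}"
      show "s \<in> {0, \<tau>} \<union> time ` D"
      proof (cases "s \<in> {0<..<\<tau>}")
        case True
        then obtain w where "w \<in> {x0<..<c}" "s = time w" using img by (metis imageE)
        then show ?thesis using s by auto
      qed (use s in auto)
    qed
  qed
  ultimately show ?thesis
    using rising_solution_has_integral_on_image[OF assms(1,2)]
      has_integral_spike_set_eq[where f = "\<lambda>s. f (?x s)" and S = "time ` ({x0<..<c} - D)" and T = "{0..\<tau>}"]
    by (simp add: D_def)
qed

lemma rising_solution_has_integral_reached:
  assumes z: "z \<in> reach"
  shows "((\<lambda>s. f (rising_solution f B x0 s)) has_integral (rising_solution f B x0 (time z) - x0)) {0..time z}"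
proof -
  have "time ` {x0<..<z} = {0<..<time z}"
  proof
    show "time ` {x0<..<z} \<subseteq> {0<..<time z}"
      using arrival_time_less[OF reach_downward_closed[OF z], of _ x0] arrival_time_less[OF z]
      by (auto intro!: imageI)
    show "{0<..<time z} \<subseteq> time ` {x0<..<z}"
    proof
      fix s assume s: "s \<in> {0<..<time z}"
      then obtain w where "w \<in> {x0..z}" "time w = s" using arrival_time_attains[OF z, of s] by auto
      moreover have "w \<noteq> x0" "w \<noteq> z" using s \<open>time w = s\<close> by auto
      ultimately show "s \<in> time ` {x0<..<z}" by force
    qed
  qed
  then show ?thesis
    using rising_solution_has_integral[of z "time z"] reach_downward_closed[OF z] reach_ge[OF z]
    by (simp add: rising_solution_arrival_time[OF z] subset_iff)
qed

lemma reach_Sup_left_lim_nonneg: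
  assumes b: "x0 < b" "{x0<..<b} \<subseteq> reach"
  shows "0 \<le> left_lim f b"
proof (rule ccontr)
  assume "\<not> 0 \<le> left_lim f b"
  then have "eventually (\<lambda>v. f v < 0) (at_left b)"
    using order_tendstoD(2)[OF regulated_tendsto_left_lim[OF reg]] by simp
  then obtain b' where "b' < b" and neg: "\<And>v. b' < v \<Longrightarrow> v < b \<Longrightarrow> f v < 0"
    unfolding eventually_at_left_field by blast
  define u where "u = (max b' x0 + b) / 2"
  have u: "max b' x0 < u" "u < b" using \<open>b' < b\<close> b(1) by (auto simp: u_def)
  then have "u \<in> reach" using b(2) by auto
  then have "0 < left_lim f u" using reach_left_lim_pos[of u u] u by simp
  moreover have "left_lim f u \<le> 0"
  proof (rule tendsto_upperbound[OF regulated_tendsto_left_lim[OF reg]])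
    show "eventually (\<lambda>v. f v \<le> 0) (at_left u)"
      unfolding eventually_at_left_field using u neg
      by (intro exI[of _ "max b' x0"]) (auto intro: less_imp_le)
  qed simp
  ultimately show False by simp
qed

lemma reach_Sup_stationary:
  assumes A2: "A2 f" and b: "x0 < b" "{x0<..<b} \<subseteq> reach" "b \<notin> reach"
  shows "f b = 0"
proof (rule ccontr)
  assume "f b \<noteq> 0"
  then have lims: "left_lim f b * right_lim f b \<noteq> 0" "\<not> (0 < left_lim f b \<and> right_lim f b < 0)"
    using A2 unfolding A2_def by auto
  have "\<not> (0 < left_lim f b \<and> 0 < right_lim f b)"
  proof
    assume at_b: "0 < left_lim f b \<and> 0 < right_lim f b"
    have "0 < left_lim f w \<and> 0 < right_lim f w" if "w \<in> {x0<..b}" for w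
    proof (cases "w = b")
      case False
      then have "w \<in> reach" using b(2) that by auto
      then show ?thesis using reach_left_lim_pos[of w w] reach_right_lim_pos[of w w] that by auto
    qed (use at_b in simp)
    then have "b \<in> reach" using b(1) by (simp add: rising_range_def)
    then show False using b(3) by simp
  qed
  then show False using lims reach_Sup_left_lim_nonneg[OF b(1,2)] by (auto simp: not_less)
qed

lemma reach_Sup:
  assumes "bdd_above reach"
  shows "x0 < Sup reach" "{x0<..<Sup reach} \<subseteq> reach" "Sup reach \<notin> reach"
proof -
  have "reach \<noteq> {}" using start_in_reach by blast
  show "x0 < Sup reach"
    using reach_extends[OF start_in_reach] cSup_upper[OF _ assms] by force
  show "{x0<..<Sup reach} \<subseteq> reach"
    using less_cSup_iff[OF \<open>reach \<noteq> {}\<close> assms] reach_downward_closed by force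
  show "Sup reach \<notin> reach"
    using reach_extends cSup_upper[OF _ assms] by force
qed

lemma arrival_time_less_Sup:
  assumes "bdd_above (time ` reach)" "z \<in> reach"
  shows "time z < Sup (time ` reach)"
proof -
  obtain z' where "z < z'" "z' \<in> reach" using reach_extends[OF assms(2)] by blast
  then have "time z < time z'" using arrival_time_less reach_ge[OF assms(2)] by blast
  then show ?thesis using cSup_upper[OF _ assms(1)] \<open>z' \<in> reach\<close> by force
qed

lemma arrival_time_image_Sup:
  assumes "bdd_above reach" "bdd_above (time ` reach)"
  shows "time ` {x0<..<Sup reach} = {0<..<Sup (time ` reach)}"
proof
  show "time ` {x0<..<Sup reach} \<subseteq> {0<..<Sup (time ` reach)}"
    using reach_Sup(2)[OF assms(1)] arrival_time_less_Sup[OF assms(2)] arrival_time_less[of _ x0] by force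
  show "{0<..<Sup (time ` reach)} \<subseteq> time ` {x0<..<Sup reach}"
  proof
    fix s assume s: "s \<in> {0<..<Sup (time ` reach)}"
    then obtain z where z: "z \<in> reach" "s < time z"
      using less_cSup_iff[OF _ assms(2)] start_in_reach by force
    then obtain w where "w \<in> {x0..z}" "time w = s" using arrival_time_attains[OF z(1), of s] s by auto
    moreover have "w \<noteq> x0" using s \<open>time w = s\<close> by auto
    moreover have "z < Sup reach"
      using z(1) reach_Sup(3)[OF assms(1)] cSup_upper[OF z(1) assms(1)]
      by (metis order.not_eq_order_implies_strict)
    ultimately show "s \<in> time ` {x0<..<Sup reach}" by force
  qed
qed

lemma rising_solution_has_integral_stopped:
  assumes A2: "A2 f" and "0 \<le> t" and early: "\<And>z. z \<in> reach \<Longrightarrow> time z < t"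
  shows "((\<lambda>s. f (rising_solution f B x0 s)) has_integral (rising_solution f B x0 t - x0)) {0..t}"
proof -
  let ?x = "rising_solution f B x0"
  have bdd: "bdd_above reach"
  proof (rule bdd_aboveI)
    fix z assume z: "z \<in> reach"
    have "(z - x0) / B < t" using arrival_time_increment_ge[OF z order_refl reach_ge[OF z]] early[OF z] by simp
    then show "z \<le> x0 + B * t" using B(1) by (simp add: field_simps)
  qed
  have bdd_time: "bdd_above (time ` reach)"
    by (rule bdd_aboveI[of _ t]) (use early in \<open>auto intro: less_imp_le\<close>)
  define b where "b = Sup reach"
  define \<tau> where "\<tau> = Sup (time ` reach)"
  have "f b = 0" unfolding b_def by (rule reach_Sup_stationary[OF A2 reach_Sup[OF bdd]])
  have "\<tau> \<le> t" unfolding \<tau>_def using early start_in_reach by (auto intro: cSup_least less_imp_le)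
  have "0 \<le> \<tau>" using cSup_upper[OF imageI[OF start_in_reach] bdd_time] by (simp add: \<tau>_def)
  have int1: "((\<lambda>s. f (?x s)) has_integral (b - x0)) {0..\<tau>}"
    using rising_solution_has_integral[OF reach_Sup(2)[OF bdd] _ arrival_time_image_Sup[OF bdd bdd_time]]
      reach_Sup(1)[OF bdd] by (simp add: b_def \<tau>_def)
  have after: "?x s = b" if "\<tau> \<le> s" for s
  proof -
    have "s \<notin> time ` reach" using arrival_time_less_Sup[OF bdd_time] that by (force simp: \<tau>_def)
    then show ?thesis by (simp add: rising_solution_def b_def)
  qed
  have "((\<lambda>s. f (?x s)) has_integral 0) {\<tau>..t}"
    using has_integral_0 has_integral_cong[of "{\<tau>..t}" "\<lambda>s. f (?x s)" "\<lambda>_. 0"] after \<open>f b = 0\<close>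
    by simp
  then have "((\<lambda>s. f (?x s)) has_integral (b - x0 + 0)) {0..t}"
    by (rule has_integral_combine[OF \<open>0 \<le> \<tau>\<close> \<open>\<tau> \<le> t\<close> int1])
  then show ?thesis using after[OF \<open>\<tau> \<le> t\<close>] by simp
qed

lemma rising_solution_solves:
  assumes "A2 f"
  shows "caratheodory_solution_on f x0 {0..} (rising_solution f B x0)"
  unfolding caratheodory_solution_on_def
proof
  fix t :: real assume "t \<in> {0..}"
  show "((\<lambda>s. f (rising_solution f B x0 s)) has_integral (rising_solution f B x0 t - x0)) {0..t}"
  proof (cases "\<exists>z\<in>reach. t \<le> time z")
    case True
    then obtain z where "z \<in> reach" "t \<le> time z" by blast
    then obtain w where "w \<in> {x0..z}" "time w = t"
      using arrival_time_attains \<open>t \<in> {0..}\<close> by force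
    then show ?thesis
      using rising_solution_has_integral_reached[OF reach_downward_closed[OF \<open>z \<in> reach\<close>]] by auto
  next
    case False
    then show ?thesis
      using rising_solution_has_integral_stopped[OF assms] \<open>t \<in> {0..}\<close> by (simp add: not_le)
  qed
qed

end

lemma caratheodory_solution_exists:
  assumes A: "A1 f" "A2 f"
  shows "\<exists>x. caratheodory_solution_on f x0 {0..} x"
proof -
  have reg: "regulated f" using A(1) by (simp add: A1_def)
  obtain B where B: "0 < B" "\<And>z. \<bar>f z\<bar> \<le> B" using A(1) unfolding A1_def bounded_pos by auto
  consider "f x0 = 0" | "0 < right_lim f x0" | "0 < right_lim (reflect f) (- x0)"
    \<comment> \<open>if \<open>f x0 \<noteq> 0\<close>, A2 excludes a vanishing one-sided limit and the sign pattern \<open>+, -\<close>\<close>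
    using A(2) unfolding A2_def right_lim_reflect[OF reg]
    by (metis linorder_neqE_linordered_idom minus_minus mult_zero_left mult_zero_right neg_0_less_iff_less)
  then show ?thesis
  proof cases
    case 1
    then have "caratheodory_solution_on f x0 {0..} (\<lambda>_. x0)"
      by (simp add: caratheodory_solution_on_def)
    then show ?thesis by blast
  next
    case 2
    then show ?thesis using rising_solution_solves[OF reg B 2 A(2)] by blast
  next
    case 3
    have "\<bar>reflect f z\<bar> \<le> B" for z using B(2) by (simp add: reflect_def)
    then have "caratheodory_solution_on (reflect f) (- x0) {0..} (rising_solution (reflect f) B (- x0))"
      using rising_solution_solves[OF regulated_reflect[OF reg] B(1) _ 3 A2_reflect[OF A]] by blast
    then show ?thesis
      using caratheodory_solution_on_reflect_iff[of "reflect f" "- x0"] by auto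
  qed
qed

theorem theorem2p1:
  fixes f :: "real \<Rightarrow> real"
  assumes "A1 f" and "A2 f"
  shows "(\<forall>x0. \<exists>x. caratheodory_solution_on f x0 {0..} x)
    \<and> (\<forall>x0 x. caratheodory_solution_on f x0 {0..} x
          \<longrightarrow> mono_on {0..} x \<or> antimono_on {0..} x)
    \<and> (\<forall>x0 \<tau> x. \<tau> \<ge> 0 \<longrightarrow> caratheodory_solution_on f x0 {0..\<tau>} x
          \<longrightarrow> mono_on {0..\<tau>} x \<or> antimono_on {0..\<tau>} x)
    \<and> (\<forall>x0. (\<exists>x. caratheodory_solution_on f x0 {0..} x) \<and>
          (\<forall>(F :: 'i filter) X x. F \<noteq> bot
             \<longrightarrow> (\<forall>\<^sub>F i in F. caratheodory_solution_on f x0 {0..} (X i))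
             \<longrightarrow> (\<forall>T\<ge>0. uniform_limit {0..T} X x F)
             \<longrightarrow> caratheodory_solution_on f x0 {0..} x))"
proof (intro conjI allI impI)
  show "\<exists>x. caratheodory_solution_on f x0 {0..} x" for x0
    by (rule caratheodory_solution_exists[OF assms])
  then show "\<exists>x. caratheodory_solution_on f x0 {0..} x" for x0 .
next
  fix x0 x assume "caratheodory_solution_on f x0 {0..} x"
  then show "mono_on {0..} x \<or> antimono_on {0..} x"
    by (rule caratheodory_solution_monotone[OF assms]) auto
next
  fix x0 x and \<tau> :: real assume "caratheodory_solution_on f x0 {0..\<tau>} x"
  then show "mono_on {0..\<tau>} x \<or> antimono_on {0..\<tau>} x"
    by (rule caratheodory_solution_monotone[OF assms]) auto
next
  fix x0 and F :: "'i filter" and X x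
  assume "F \<noteq> bot" "\<forall>\<^sub>F i in F. caratheodory_solution_on f x0 {0..} (X i)"
    "\<forall>T\<ge>0. uniform_limit {0..T} X x F"
  then show "caratheodory_solution_on f x0 {0..} x"
    by (rule caratheodory_solutions_closed[OF assms])
qed

end
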